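(* Let $(\Gamma,d)$ be a countable discrete metric space admitting an $F$-function, and let $(\mathcal{A},\{\mathcal{A}_X\}_{X\in\mathcal{P}_0(\Gamma)},\Phi)$ be a quantum many-body system satisfying (A1) whose interaction is bounded and has finite range $\mathfrak{r}>0$. Fix $X\in\mathcal{P}_0(\Gamma)$ and $n>0$, and put \[ H_{R,n}:=\sum_{Y\in\mathcal{P}_0(\Gamma),\ Y\cap X_{\mathrm{int}}(n+\mathfrak{r})\neq\emptyset}\Phi(Y). \] Then \[ \|[H_\Lambda,H_{R,n}]\|\le2\mathfrak{j}'\mathfrak{j}''\,|\partial_\Phi(X_{\mathrm{int}}(n+\mathfrak{r}))|\quad\text{for every }\Lambda\in\mathcal{P}_0(\Gamma)\text{ with }\Lambda\supseteq X_{\mathrm{int}}(n+\mathfrak{r}), \] \[ \|[H_\Lambda,H_{X(n+\mathfrak{r})}]\|\le2\mathfrak{j}'\mathfrak{j}''\,|\partial_\Phi(X(n+\mathfrak{r}))|\quad\text{for every }\Lambda\in\mathcal{P}_0(\Gamma)\text{ with }\Lambda\supseteq X(n+\mathfrak{r}). \]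
   Context: $(\Gamma,d)$ is a countable discrete metric space, $\mathcal{P}_0(\Gamma)$ its finite subsets, $\Lambda^c:=\Gamma\setminus\Lambda$, $d(x,\Lambda):=\inf_{y\in\Lambda}d(x,y)$, $\mathrm{diam}(Y):=\sup_{x,y\in Y}d(x,y)$. An $F$-function is a non-increasing $F:[0,\infty)\to(0,\infty)$ with $\sup_{x}\sum_{y}F(d(x,y))<\infty$ and $\sup_{x,y}\sum_{z}F(d(x,z))F(d(z,y))/F(d(x,y))<\infty$. A quantum many-body system is a triple $(\mathcal{A},\{\mathcal{A}_X\},\Phi)$: $\mathcal{A}$ a unital $C^*$-algebra, $\{\mathcal{A}_X\}_{X\in\mathcal{P}_0(\Gamma)}$ an increasing net of simple $C^*$-subalgebras with norm-dense union $\mathcal{A}_{\mathrm{loc}}$, $\Phi:\mathcal{P}_0(\Gamma)\to\mathcal{A}_{\mathrm{loc}}$ with $\Phi(X)=\Phi(X)^*\in\mathcal{A}_X$; for $\Lambda\subseteq\Gamma$, $\mathcal{A}_\Lambda$ is generated by the $\mathcal{A}_X$ with $X\subseteq\Lambda$ finite. (A1): $\Phi(X)$ commutes with $\mathcal{A}_{X^c}$. Bounded: $\sup_x\sum_{Y\ni x}\|\Phi(Y)\|/|Y|<\infty$; finite range $\mathfrak{r}$: $\Phi(Y)=0$ if $\mathrm{diam}(Y)>\mathfrak{r}$. $\mathfrak{j}':=\sup_x\sum_{Y\in\mathcal{P}_0(\Gamma),x\in Y}\|\Phi(Y)\|$, $\mathfrak{j}'':=\sup_x\sum_{Y\in\mathcal{P}_0(\Gamma),x\in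 Y}|Y|\|\Phi(Y)\|$. For $\Lambda\subseteq\Gamma$ finite, $H_\Lambda:=\sum_{Y\subseteq\Lambda}\Phi(Y)$. $\partial_\Phi\Lambda:=\{x\in\Lambda:\exists Y\in\mathcal{P}_0(\Gamma),\ x\in Y,\ Y\cap\Lambda^c\neq\emptyset,\ \Phi(Y)\neq0\}$. $X_{\mathrm{int}}(m):=\{x\in\Gamma:d(x,X^c)>m\}$, $X(m):=\{x\in\Gamma:d(x,X)\le m\}$. *)

theory Defs
  imports "HOL-Analysis.Analysis" "HOL-Library.Countable"
begin

text \<open>Distance from a point to a set, with the convention inf over the empty set = +infinity.\<close>
definition setdist_e :: "'b::metric_space \<Rightarrow> 'b set \<Rightarrow> ereal" where
  "setdist_e x L = (INF y\<in>L. ereal (dist x y))"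

definition Xint :: "'b::metric_space set \<Rightarrow> real \<Rightarrow> 'b set" where
  "Xint X m = {x. setdist_e x (- X) > ereal m}"

definition Xnbhd :: "'b::metric_space set \<Rightarrow> real \<Rightarrow> 'b set" where
  "Xnbhd X m = {x. setdist_e x X \<le> ereal m}"

definition F_function :: "('b::metric_space) itself \<Rightarrow> (real \<Rightarrow> real) \<Rightarrow> bool" where
  "F_function _ F \<longleftrightarrow>
     (\<forall>s t. 0 \<le> s \<longrightarrow> s \<le> t \<longrightarrow> F t \<le> F s) \<and>
     (\<forall>s. 0 \<le> s \<longrightarrow> 0 < F s) \<and>
     (\<forall>x::'b. (\<lambda>y. F (dist x y)) summable_on UNIV) \<and>
     (\<exists>C. \<forall>x::'b. (\<Sum>\<^sub>\<infinity>y. F (dist x y)) \<le> C) \<and>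
     (\<forall>x y::'b. (\<lambda>z. F (dist x z) * F (dist z y)) summable_on UNIV) \<and>
     (\<exists>C. \<forall>x y::'b. (\<Sum>\<^sub>\<infinity>z. F (dist x z) * F (dist z y)) / F (dist x y) \<le> C)"

definition cstar_algebra ::
  "(complex \<Rightarrow> 'a::{real_normed_algebra_1, banach} \<Rightarrow> 'a) \<Rightarrow> ('a \<Rightarrow> 'a) \<Rightarrow> bool" where
  "cstar_algebra scC st \<longleftrightarrow>
     (\<forall>r x. scC (complex_of_real r) x = r *\<^sub>R x) \<and>
     (\<forall>a x y. scC a (x + y) = scC a x + scC a y) \<and>
     (\<forall>a b x. scC (a + b) x = scC a x + scC b x) \<and>
     (\<forall>a b x. scC a (scC b x) = scC (a * b) x) \<and>
     (\<forall>a x. norm (scC a x) = cmod a * norm x) \<and>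
     (\<forall>a x y. scC a (x * y) = scC a x * y \<and> scC a (x * y) = x * scC a y) \<and>
     (\<forall>x. st (st x) = x) \<and>
     (\<forall>x y. st (x + y) = st x + st y) \<and>
     (\<forall>x y. st (x * y) = st y * st x) \<and>
     (\<forall>a x. st (scC a x) = scC (cnj a) (st x)) \<and>
     (\<forall>x. norm (st x * x) = (norm x)\<^sup>2)"

definition cstar_subalg ::
  "(complex \<Rightarrow> 'a::{real_normed_algebra_1, banach} \<Rightarrow> 'a) \<Rightarrow> ('a \<Rightarrow> 'a) \<Rightarrow> 'a set \<Rightarrow> bool" where
  "cstar_subalg scC st B \<longleftrightarrow>
     0 \<in> B \<and> closed B \<and>
     (\<forall>x\<in>B. \<forall>y\<in>B. x + y \<in> B \<and> x * y \<in> B) \<and>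
     (\<forall>a. \<forall>x\<in>B. scC a x \<in> B) \<and>
     (\<forall>x\<in>B. st x \<in> B)"

definition closed_ideal_in ::
  "(complex \<Rightarrow> 'a::{real_normed_algebra_1, banach} \<Rightarrow> 'a) \<Rightarrow> 'a set \<Rightarrow> 'a set \<Rightarrow> bool" where
  "closed_ideal_in scC B I \<longleftrightarrow>
     I \<subseteq> B \<and> 0 \<in> I \<and> closed I \<and>
     (\<forall>x\<in>I. \<forall>y\<in>I. x + y \<in> I) \<and>
     (\<forall>a. \<forall>x\<in>I. scC a x \<in> I) \<and>
     (\<forall>b\<in>B. \<forall>x\<in>I. b * x \<in> I \<and> x * b \<in> I)"

definition simple_cstar_subalg ::
  "(complex \<Rightarrow> 'a::{real_normed_algebra_1, banach} \<Rightarrow> 'a) \<Rightarrow> ('a \<Rightarrow> 'a) \<Rightarrow> 'a set \<Rightarrow> bool" where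
  "simple_cstar_subalg scC st B \<longleftrightarrow>
     cstar_subalg scC st B \<and> B \<noteq> {0} \<and>
     (\<forall>I. closed_ideal_in scC B I \<longrightarrow> I = {0} \<or> I = B)"

definition cstar_generated ::
  "(complex \<Rightarrow> 'a::{real_normed_algebra_1, banach} \<Rightarrow> 'a) \<Rightarrow> ('a \<Rightarrow> 'a) \<Rightarrow> 'a set \<Rightarrow> 'a set" where
  "cstar_generated scC st S = \<Inter> {B. cstar_subalg scC st B \<and> S \<subseteq> B}"

definition alg_of ::
  "(complex \<Rightarrow> 'a::{real_normed_algebra_1, banach} \<Rightarrow> 'a) \<Rightarrow> ('a \<Rightarrow> 'a) \<Rightarrow> ('b set \<Rightarrow> 'a set) \<Rightarrow> 'b set \<Rightarrow> 'a set" where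
  "alg_of scC st A L = cstar_generated scC st (\<Union> {A Z | Z. finite Z \<and> Z \<subseteq> L})"

definition qmb_system ::
  "(complex \<Rightarrow> 'a::{real_normed_algebra_1, banach} \<Rightarrow> 'a) \<Rightarrow> ('a \<Rightarrow> 'a) \<Rightarrow> ('b set \<Rightarrow> 'a set) \<Rightarrow> ('b set \<Rightarrow> 'a) \<Rightarrow> bool" where
  "qmb_system scC st A \<Phi> \<longleftrightarrow>
     cstar_algebra scC st \<and>
     (\<forall>X. finite X \<longrightarrow> simple_cstar_subalg scC st (A X)) \<and>
     (\<forall>X Y. finite X \<longrightarrow> finite Y \<longrightarrow> X \<subseteq> Y \<longrightarrow> A X \<subseteq> A Y) \<and>
     closure (\<Union> {A X | X. finite X}) = UNIV \<and>
     (\<forall>X. finite X \<longrightarrow> \<Phi> X \<in> A X \<and> st (\<Phi> X) = \<Phi> X)"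

definition A1 ::
  "(complex \<Rightarrow> 'a::{real_normed_algebra_1, banach} \<Rightarrow> 'a) \<Rightarrow> ('a \<Rightarrow> 'a) \<Rightarrow> ('b set \<Rightarrow> 'a set) \<Rightarrow> ('b set \<Rightarrow> 'a) \<Rightarrow> bool" where
  "A1 scC st A \<Phi> \<longleftrightarrow>
     (\<forall>X. finite X \<longrightarrow> (\<forall>b\<in>alg_of scC st A (- X). \<Phi> X * b = b * \<Phi> X))"

definition bounded_interaction :: "('b set \<Rightarrow> 'a::real_normed_vector) \<Rightarrow> bool" where
  "bounded_interaction \<Phi> \<longleftrightarrow>
     (\<forall>x. (\<lambda>Y. norm (\<Phi> Y) / real (card Y)) summable_on {Y. finite Y \<and> x \<in> Y}) \<and>
     (\<exists>C. \<forall>x. (\<Sum>\<^sub>\<infinity>Y\<in>{Y. finite Y \<and> x \<in> Y}. norm (\<Phi> Y) / real (card Y)) \<le> C)"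

definition finite_range :: "('b::metric_space set \<Rightarrow> 'a::zero) \<Rightarrow> real \<Rightarrow> bool" where
  "finite_range \<Phi> r \<longleftrightarrow> (\<forall>Y. finite Y \<longrightarrow> diameter Y > r \<longrightarrow> \<Phi> Y = 0)"

definition jprime :: "('b set \<Rightarrow> 'a::real_normed_vector) \<Rightarrow> real" where
  "jprime \<Phi> = (SUP x. \<Sum>\<^sub>\<infinity>Y\<in>{Y. finite Y \<and> x \<in> Y}. norm (\<Phi> Y))"

definition jsecond :: "('b set \<Rightarrow> 'a::real_normed_vector) \<Rightarrow> real" where
  "jsecond \<Phi> = (SUP x. \<Sum>\<^sub>\<infinity>Y\<in>{Y. finite Y \<and> x \<in> Y}. real (card Y) * norm (\<Phi> Y))"

definition H_loc :: "('b set \<Rightarrow> 'a::real_normed_vector) \<Rightarrow> 'b set \<Rightarrow> 'a" where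
  "H_loc \<Phi> L = (\<Sum>Y\<in>Pow L. \<Phi> Y)"

definition bdry_Phi :: "('b set \<Rightarrow> 'a::zero) \<Rightarrow> 'b set \<Rightarrow> 'b set" where
  "bdry_Phi \<Phi> L = {x\<in>L. \<exists>Y. finite Y \<and> x \<in> Y \<and> Y \<inter> - L \<noteq> {} \<and> \<Phi> Y \<noteq> 0}"

definition commutator :: "'a::ring \<Rightarrow> 'a \<Rightarrow> 'a" where
  "commutator a b = a * b - b * a"

end

theory Submission
  imports Defs
begin

(* Expanding a commutator of two local Hamiltonians bilinearly, only pairs of interaction terms
   Phi Y, Phi Z with overlapping supports survive (disjoint ones commute by (A1)), and the pairs
   with both supports inside the region cancel. In every remaining pair one support Y crosses the
   boundary, so the pair is reached by a chain x \<in> Y, y \<in> Y \<inter> Z from a boundary point x.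
   Summing 2 ||Phi Y|| ||Phi Z|| over the chains starting at a fixed x gives at most j' j''
   (the factor |Y| from the choice of y is absorbed into j''). Finite range and the F-function make
   all these sums finite with uniformly bounded cardinalities, so j' and j'' are finite suprema. *)

definition active_at :: "('b set \<Rightarrow> 'a::zero) \<Rightarrow> 'b \<Rightarrow> 'b set set" where
  "active_at \<Phi> x = {Y. finite Y \<and> x \<in> Y \<and> \<Phi> Y \<noteq> 0}"

lemma active_at_finite [dest]: "Y \<in> active_at \<Phi> x \<Longrightarrow> finite Y"
  by (simp add: active_at_def)

lemma bdry_PhiI: "Y \<in> active_at \<Phi> x \<Longrightarrow> x \<in> M \<Longrightarrow> \<not> Y \<subseteq> M \<Longrightarrow> x \<in> bdry_Phi \<Phi> M"
  unfolding active_at_def bdry_Phi_def by blast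

lemma finite_bdry_Phi: "finite M \<Longrightarrow> finite (bdry_Phi \<Phi> M)"
  by (simp add: bdry_Phi_def)

lemma commutator_self [simp]: "commutator a a = 0"
  by (simp add: commutator_def)

lemma norm_commutator_commute:
  "norm (commutator a b) = norm (commutator b (a::'a::real_normed_algebra))"
  by (metis commutator_def minus_diff_eq norm_minus_cancel)

lemma norm_commutator_le:
  "norm (commutator a b) \<le> 2 * norm a * norm (b::'a::real_normed_algebra)"
proof -
  have "norm (commutator a b) \<le> norm (a * b) + norm (b * a)"
    unfolding commutator_def by (rule norm_triangle_ineq4)
  also have "\<dots> \<le> norm a * norm b + norm b * norm a"
    by (intro add_mono norm_mult_ineq)
  finally show ?thesis by simp
qed

lemma commutator_sum_sum:
  "commutator (sum f S) (sum g S') = (\<Sum>(Y, Z)\<in>S \<times> S'. commutator (f Y) (g Z))"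
proof -
  have "commutator (sum f S) (sum g S')
      = (\<Sum>Y\<in>S. \<Sum>Z\<in>S'. f Y * g Z) - (\<Sum>Y\<in>S. \<Sum>Z\<in>S'. g Z * f Y)"
    by (simp add: commutator_def sum_product sum.swap[of _ S'])
  also have "\<dots> = (\<Sum>(Y, Z)\<in>S \<times> S'. commutator (f Y) (g Z))"
    by (simp add: commutator_def sum_subtractf flip: sum.cartesian_product)
  finally show ?thesis .
qed

lemma commutator_sum_eq_sum_off_square:
  assumes "finite S" "finite S'" "T \<subseteq> S" "T \<subseteq> S'"
  shows "commutator (sum f S) (sum f S') = (\<Sum>(Y, Z)\<in>S \<times> S' - T \<times> T. commutator (f Y) (f Z))"
proof -
  have "(\<Sum>(Y, Z)\<in>T \<times> T. commutator (f Y) (f Z)) = 0"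
    using commutator_sum_sum[of f T f T] by simp
  moreover have "T \<times> T \<subseteq> S \<times> S'" using assms by blast
  ultimately show ?thesis
    using assms by (simp add: commutator_sum_sum sum.subset_diff[of "T \<times> T"])
qed

locale local_interaction =
  fixes \<Phi> :: "'b set \<Rightarrow> 'a::real_normed_algebra_1" and J1 J2 :: real
  assumes disjoint_commute:
      "finite Y \<Longrightarrow> finite Z \<Longrightarrow> Y \<inter> Z = {} \<Longrightarrow> \<Phi> Y * \<Phi> Z = \<Phi> Z * \<Phi> Y"
    and finite_active_at: "finite (active_at \<Phi> x)"
    and sum_norm_active_at_le: "(\<Sum>Y\<in>active_at \<Phi> x. norm (\<Phi> Y)) \<le> J1"
    and sum_card_norm_active_at_le: "(\<Sum>Y\<in>active_at \<Phi> x. real (card Y) * norm (\<Phi> Y)) \<le> J2"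
begin

lemma J1_nonneg: "0 \<le> J1"
  using sum_norm_active_at_le[of undefined] order_trans sum_nonneg norm_ge_zero by meson

lemma sum_norm_chains_le:
  "(\<Sum>(W, y, V)\<in>(SIGMA W:active_at \<Phi> x. SIGMA y:W. active_at \<Phi> y). norm (\<Phi> W) * norm (\<Phi> V))
     \<le> J1 * J2"
proof -
  have "(\<Sum>(W, y, V)\<in>(SIGMA W:active_at \<Phi> x. SIGMA y:W. active_at \<Phi> y). norm (\<Phi> W) * norm (\<Phi> V))
      = (\<Sum>W\<in>active_at \<Phi> x. \<Sum>(y, V)\<in>(SIGMA y:W. active_at \<Phi> y). norm (\<Phi> W) * norm (\<Phi> V))"
    by (subst sum.Sigma) (auto simp: finite_active_at)
  also have "\<dots> = (\<Sum>W\<in>active_at \<Phi> x. norm (\<Phi> W) * (\<Sum>y\<in>W. \<Sum>V\<in>active_at \<Phi> y. norm (\<Phi> V)))"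
    by (intro sum.cong refl) (auto simp: finite_active_at sum_distrib_left simp flip: sum.Sigma)
  also have "\<dots> \<le> (\<Sum>W\<in>active_at \<Phi> x. norm (\<Phi> W) * (real (card W) * J1))"
    by (intro sum_mono mult_left_mono) (auto intro: sum_bounded_above sum_norm_active_at_le)
  also have "\<dots> = J1 * (\<Sum>W\<in>active_at \<Phi> x. real (card W) * norm (\<Phi> W))"
    by (simp add: sum_distrib_left mult_ac)
  also have "\<dots> \<le> J1 * J2"
    by (intro mult_left_mono J1_nonneg sum_card_norm_active_at_le)
  finally show ?thesis .
qed

lemma norm_commutator_sum_le:
  assumes finite: "finite S" "finite S'" "finite B" "\<forall>Y\<in>S \<union> S'. finite Y"
    and T: "T \<subseteq> S" "T \<subseteq> S'"
    and crossing: "\<And>Y Z y. Y \<in> S \<Longrightarrow> Z \<in> S' \<Longrightarrow> (Y, Z) \<notin> T \<times> T \<Longrightarrow>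
                     Y \<in> active_at \<Phi> y \<Longrightarrow> Z \<in> active_at \<Phi> y \<Longrightarrow> Y \<inter> B \<noteq> {}"
  shows "norm (commutator (sum \<Phi> S) (sum \<Phi> S')) \<le> 2 * J1 * J2 * real (card B)"
proof -
  define c where "c = (\<lambda>(Y, Z). commutator (\<Phi> Y) (\<Phi> Z))"
  define Q where "Q = {p \<in> S \<times> S' - T \<times> T. c p \<noteq> 0}"
  define chains where "chains = (SIGMA x:B. SIGMA W:active_at \<Phi> x. SIGMA y:W. active_at \<Phi> y)"
  have finite_chains: "finite chains"
    unfolding chains_def using finite(3) by (auto simp: finite_active_at intro!: finite_SigmaI)
  have chain_through: "\<exists>q\<in>chains. (\<lambda>(x, W, y, V). (W, V)) q = p \<and>
                         norm (c p) \<le> (\<lambda>(x, W, y, V). 2 * norm (\<Phi> W) * norm (\<Phi> V)) q"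
    if "p \<in> Q" for p
  proof -
    obtain Y Z where p: "p = (Y, Z)" "Y \<in> S" "Z \<in> S'" "(Y, Z) \<notin> T \<times> T" "c (Y, Z) \<noteq> 0"
      using \<open>p \<in> Q\<close> by (cases p) (auto simp: Q_def)
    have finite_YZ: "finite Y" "finite Z" using p finite(4) by auto
    have "Y \<inter> Z \<noteq> {}"
      using p(5) disjoint_commute[OF finite_YZ] by (auto simp: c_def commutator_def)
    then obtain y where "y \<in> Y" "y \<in> Z" by blast
    moreover have "\<Phi> Y \<noteq> 0" "\<Phi> Z \<noteq> 0"
      using p(5) by (auto simp: c_def commutator_def)
    ultimately have active: "Y \<in> active_at \<Phi> y" "Z \<in> active_at \<Phi> y"
      using finite_YZ by (simp_all add: active_at_def)
    then obtain x where "x \<in> B" "x \<in> Y" using crossing p by blast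
    then have "(x, Y, y, Z) \<in> chains"
      using active \<open>y \<in> Y\<close> by (auto simp: chains_def active_at_def)
    then show ?thesis
      using p(1) norm_commutator_le[of "\<Phi> Y" "\<Phi> Z"]
      by (intro bexI[of _ "(x, Y, y, Z)"]) (auto simp: c_def)
  qed
  have "norm (commutator (sum \<Phi> S) (sum \<Phi> S')) = norm (\<Sum>p\<in>S \<times> S' - T \<times> T. c p)"
    using finite T by (simp add: commutator_sum_eq_sum_off_square c_def)
  also have "\<dots> \<le> (\<Sum>p\<in>S \<times> S' - T \<times> T. norm (c p))"
    by (rule norm_sum)
  also have "\<dots> = (\<Sum>p\<in>Q. norm (c p))"
    using finite by (intro sum.mono_neutral_right) (auto simp: Q_def)
  also have "\<dots> \<le> (\<Sum>(x, W, y, V)\<in>chains. 2 * norm (\<Phi> W) * norm (\<Phi> V))"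
    using finite finite_chains chain_through
    by (intro sum_le_included[where i = "\<lambda>(x, W, y, V). (W, V)"]) (auto simp: Q_def)
  also have "\<dots> = (\<Sum>x\<in>B. 2 * (\<Sum>(W, y, V)\<in>(SIGMA W:active_at \<Phi> x. SIGMA y:W. active_at \<Phi> y).
                                  norm (\<Phi> W) * norm (\<Phi> V)))"
    using finite(3) unfolding chains_def
    by (subst sum.Sigma[symmetric])
      (auto simp: finite_active_at sum_distrib_left case_prod_beta mult.assoc intro!: finite_SigmaI)
  also have "\<dots> \<le> (\<Sum>x\<in>B. 2 * (J1 * J2))"
    by (intro sum_mono mult_left_mono sum_norm_chains_le) simp
  finally show ?thesis by (simp add: mult_ac)
qed

lemma norm_commutator_H_loc_le:
  assumes "finite L" "M \<subseteq> L"
  shows "norm (commutator (H_loc \<Phi> L) (H_loc \<Phi> M))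
           \<le> 2 * J1 * J2 * real (card (bdry_Phi \<Phi> M))"
  unfolding H_loc_def
proof (rule norm_commutator_sum_le[where T = "Pow M"])
  show "finite (bdry_Phi \<Phi> M)"
    using assms finite_subset finite_bdry_Phi by blast
  fix Y Z y
  assume "Y \<in> Pow L" "Z \<in> Pow M" "(Y, Z) \<notin> Pow M \<times> Pow M"
    and "Y \<in> active_at \<Phi> y" "Z \<in> active_at \<Phi> y"
  then have "y \<in> bdry_Phi \<Phi> M"
    by (intro bdry_PhiI) (auto simp: active_at_def)
  then show "Y \<inter> bdry_Phi \<Phi> M \<noteq> {}"
    using \<open>Y \<in> active_at \<Phi> y\<close> by (auto simp: active_at_def)
qed (use assms finite_subset in auto)

lemma infsum_meeting_eq_sum:
  assumes "finite M"
  shows "(\<Sum>\<^sub>\<infinity>Y\<in>{Y. finite Y \<and> Y \<inter> M \<noteq> {}}. \<Phi> Y) = sum \<Phi> (\<Union>x\<in>M. active_at \<Phi> x)"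
proof -
  have "(\<Sum>\<^sub>\<infinity>Y\<in>{Y. finite Y \<and> Y \<inter> M \<noteq> {}}. \<Phi> Y)
      = (\<Sum>\<^sub>\<infinity>Y\<in>(\<Union>x\<in>M. active_at \<Phi> x). \<Phi> Y)"
    by (rule infsum_cong_neutral) (auto simp: active_at_def)
  then show ?thesis
    using assms by (simp add: finite_active_at)
qed

lemma norm_commutator_H_loc_meeting_le:
  assumes "finite L" "M \<subseteq> L"
  shows "norm (commutator (H_loc \<Phi> L) (\<Sum>\<^sub>\<infinity>Y\<in>{Y. finite Y \<and> Y \<inter> M \<noteq> {}}. \<Phi> Y))
           \<le> 2 * J1 * J2 * real (card (bdry_Phi \<Phi> M))"
proof -
  define S where "S = (\<Union>x\<in>M. active_at \<Phi> x)"
  have "finite M" using assms finite_subset by blast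
  have "norm (commutator (sum \<Phi> S) (H_loc \<Phi> L)) \<le> 2 * J1 * J2 * real (card (bdry_Phi \<Phi> M))"
    unfolding H_loc_def
  proof (rule norm_commutator_sum_le[where T = "S \<inter> Pow L"])
    show "finite S" "finite (bdry_Phi \<Phi> M)"
      using \<open>finite M\<close> by (auto simp: S_def finite_bdry_Phi finite_active_at)
    fix Y Z y
    assume Y: "Y \<in> S" and Z: "Z \<in> Pow L"
      and off: "(Y, Z) \<notin> (S \<inter> Pow L) \<times> (S \<inter> Pow L)"
      and active: "Y \<in> active_at \<Phi> y" "Z \<in> active_at \<Phi> y"
    obtain x where "x \<in> M" "Y \<in> active_at \<Phi> x" using Y by (auto simp: S_def)
    \<comment> \<open>If Y stayed inside M, then Z would meet M at y and both would lie in S \<inter> Pow L.\<close>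
    moreover have "\<not> Y \<subseteq> M"
      using Y Z off active assms(2) by (auto simp: S_def active_at_def)
    ultimately have "x \<in> Y \<inter> bdry_Phi \<Phi> M"
      by (auto intro: bdry_PhiI simp: active_at_def)
    then show "Y \<inter> bdry_Phi \<Phi> M \<noteq> {}" by blast
  qed (use assms finite_subset in \<open>auto simp: S_def\<close>)
  then show ?thesis
    using \<open>finite M\<close> by (simp add: infsum_meeting_eq_sum S_def norm_commutator_commute)
qed

end

lemma F_function_cball_card_bounded:
  assumes F: "F_function TYPE('b::metric_space) F" and "0 \<le> R"
  shows "\<exists>K. \<forall>x::'b. finite (cball x R) \<and> card (cball x R) \<le> K"
proof -
  obtain C where C: "\<And>x::'b. (\<Sum>\<^sub>\<infinity>y. F (dist x y)) \<le> C"
    using F unfolding F_function_def by blast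
  have F_pos: "0 \<le> s \<Longrightarrow> 0 < F s" and F_antimono: "0 \<le> s \<Longrightarrow> s \<le> t \<Longrightarrow> F t \<le> F s"
    and summable: "(\<lambda>y. F (dist x y)) summable_on UNIV" for s t and x :: 'b
    using F unfolding F_function_def by blast+
  \<comment> \<open>Each point of the ball contributes at least F R to the sum bounded by C.\<close>
  have card_le: "real (card S) \<le> C / F R" if "finite S" "S \<subseteq> cball x R" for S and x :: 'b
  proof -
    have "real (card S) * F R = (\<Sum>y\<in>S. F R)" by simp
    also have "\<dots> \<le> (\<Sum>y\<in>S. F (dist x y))"
      using that by (intro sum_mono F_antimono) auto
    also have "\<dots> \<le> (\<Sum>\<^sub>\<infinity>y. F (dist x y))"
      using that summable F_pos by (intro finite_sum_le_infsum) (auto intro: less_imp_le)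
    also have "\<dots> \<le> C" by (rule C)
    finally show ?thesis using F_pos[OF \<open>0 \<le> R\<close>] by (simp add: field_simps)
  qed
  have finite_cball: "finite (cball x R)" for x :: 'b
  proof (rule ccontr)
    assume "infinite (cball x R)"
    then obtain S where S: "finite S" "card S = nat \<lceil>C / F R\<rceil> + 1" "S \<subseteq> cball x R"
      using infinite_arbitrarily_large by blast
    then show False
      using card_le[OF S(1,3)] real_nat_ceiling_ge[of "C / F R"] by simp
  qed
  have "card (cball x R) \<le> nat \<lceil>C / F R\<rceil>" for x :: 'b
    using card_le[OF finite_cball order_refl, of x] by linarith
  then show ?thesis using finite_cball by blast
qed

lemma active_at_subset_Pow_cball:
  assumes "finite_range \<Phi> r"
  shows "active_at \<Phi> x \<subseteq> Pow (cball x r)"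
proof
  fix Y assume Y: "Y \<in> active_at \<Phi> x"
  then have "diameter Y \<le> r"
    using assms unfolding finite_range_def active_at_def by force
  moreover have "dist x y \<le> diameter Y" if "y \<in> Y" for y
    using Y that by (intro diameter_bounded_bound finite_imp_bounded) (auto simp: active_at_def)
  ultimately show "Y \<in> Pow (cball x r)" by force
qed

lemma active_at_uniformly_bounded:
  fixes \<Phi> :: "'b::metric_space set \<Rightarrow> 'a::zero"
  assumes "F_function TYPE('b) F" "finite_range \<Phi> r" "0 \<le> r"
  shows "\<exists>K. \<forall>x::'b. finite (active_at \<Phi> x) \<and> (\<forall>Y\<in>active_at \<Phi> x. card Y \<le> K)"
proof -
  obtain K where K: "\<And>x::'b. finite (cball x r) \<and> card (cball x r) \<le> K"
    using F_function_cball_card_bounded[OF assms(1,3)] by blast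
  have "finite (active_at \<Phi> x) \<and> (\<forall>Y\<in>active_at \<Phi> x. card Y \<le> K)" for x
  proof -
    have "finite (active_at \<Phi> x)"
      using active_at_subset_Pow_cball[OF assms(2)] K by (meson finite_Pow_iff finite_subset)
    moreover have "card Y \<le> K" if "Y \<in> active_at \<Phi> x" for Y
      using active_at_subset_Pow_cball[OF assms(2)] K that
      by (meson PowD card_mono le_trans subsetD)
    ultimately show ?thesis by blast
  qed
  then show ?thesis by blast
qed

lemma infsum_eq_sum_active_at:
  assumes "finite (active_at \<Phi> x)" "\<And>Y. \<Phi> Y = 0 \<Longrightarrow> f Y = 0"
  shows "(\<Sum>\<^sub>\<infinity>Y\<in>{Y. finite Y \<and> x \<in> Y}. f Y) = (\<Sum>Y\<in>active_at \<Phi> x. f Y)"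
proof -
  have "(\<Sum>\<^sub>\<infinity>Y\<in>{Y. finite Y \<and> x \<in> Y}. f Y) = (\<Sum>\<^sub>\<infinity>Y\<in>active_at \<Phi> x. f Y)"
    using assms(2) by (intro infsum_cong_neutral) (auto simp: active_at_def)
  then show ?thesis using assms(1) by simp
qed

lemma sum_card_norm_active_at_bounded:
  fixes \<Phi> :: "'b set \<Rightarrow> 'a::real_normed_vector"
  assumes "bounded_interaction \<Phi>"
    and K: "\<And>x. finite (active_at \<Phi> x) \<and> (\<forall>Y\<in>active_at \<Phi> x. card Y \<le> K)"
  shows "\<exists>M. \<forall>x. (\<Sum>Y\<in>active_at \<Phi> x. real (card Y) * norm (\<Phi> Y)) \<le> M"
proof -
  obtain C where C: "\<And>x. (\<Sum>\<^sub>\<infinity>Y\<in>{Y. finite Y \<and> x \<in> Y}. norm (\<Phi> Y) / real (card Y)) \<le> C"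
    using assms(1) unfolding bounded_interaction_def by blast
  have "(\<Sum>Y\<in>active_at \<Phi> x. real (card Y) * norm (\<Phi> Y)) \<le> real K ^ 2 * C" for x
  proof -
    have "(\<Sum>Y\<in>active_at \<Phi> x. real (card Y) * norm (\<Phi> Y))
        = (\<Sum>Y\<in>active_at \<Phi> x. real (card Y) ^ 2 * (norm (\<Phi> Y) / real (card Y)))"
      by (intro sum.cong refl) (simp add: power2_eq_square)
    also have "\<dots> \<le> (\<Sum>Y\<in>active_at \<Phi> x. real K ^ 2 * (norm (\<Phi> Y) / real (card Y)))"
      using K by (intro sum_mono mult_right_mono power_mono) auto
    also have "\<dots> = real K ^ 2 * (\<Sum>\<^sub>\<infinity>Y\<in>{Y. finite Y \<and> x \<in> Y}. norm (\<Phi> Y) / real (card Y))"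
      using K[of x] by (simp add: infsum_eq_sum_active_at[of \<Phi> x] sum_distrib_left)
    also have "\<dots> \<le> real K ^ 2 * C"
      by (intro mult_left_mono C) simp
    finally show ?thesis .
  qed
  then show ?thesis by blast
qed

lemma disjoint_interactions_commute:
  assumes "qmb_system scC st A \<Phi>" "A1 scC st A \<Phi>" "finite Y" "finite Z" "Y \<inter> Z = {}"
  shows "\<Phi> Y * \<Phi> Z = \<Phi> Z * \<Phi> Y"
proof -
  have "\<Phi> Z \<in> A Z" using assms by (simp add: qmb_system_def)
  then have "\<Phi> Z \<in> alg_of scC st A (- Y)"
    using assms unfolding alg_of_def cstar_generated_def by blast
  then show ?thesis using assms unfolding A1_def by blast
qed

lemma local_interaction_jprime_jsecond:
  fixes \<Phi> :: "'b::metric_space set \<Rightarrow> 'a::{real_normed_algebra_1, banach}"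
  assumes F: "F_function TYPE('b) F"
    and sys: "qmb_system scC st A \<Phi>" and a1: "A1 scC st A \<Phi>"
    and bdd: "bounded_interaction \<Phi>" and range: "finite_range \<Phi> r" "0 \<le> r"
  shows "local_interaction \<Phi> (jprime \<Phi>) (jsecond \<Phi>)"
proof -
  define j1 where "j1 x = (\<Sum>Y\<in>active_at \<Phi> x. norm (\<Phi> Y))" for x
  define j2 where "j2 x = (\<Sum>Y\<in>active_at \<Phi> x. real (card Y) * norm (\<Phi> Y))" for x
  obtain K where K: "\<And>x. finite (active_at \<Phi> x) \<and> (\<forall>Y\<in>active_at \<Phi> x. card Y \<le> K)"
    using active_at_uniformly_bounded[OF F range] by blast
  obtain M where M: "\<And>x. j2 x \<le> M"
    using sum_card_norm_active_at_bounded[OF bdd K] unfolding j2_def by blast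
  have j1_le_j2: "j1 x \<le> j2 x" for x
    unfolding j1_def j2_def
    by (intro sum_mono) (auto simp: active_at_def card_gt_0_iff Suc_le_eq
                              intro!: mult_right_mono[of 1, simplified])
  have "jprime \<Phi> = (SUP x. j1 x)" "jsecond \<Phi> = (SUP x. j2 x)"
    unfolding jprime_def jsecond_def j1_def j2_def
    using K by (auto intro!: SUP_cong infsum_eq_sum_active_at)
  moreover have "bdd_above (range j1)" "bdd_above (range j2)"
    using order_trans[OF j1_le_j2 M] M by (meson bdd_aboveI2)+
  ultimately have "j1 x \<le> jprime \<Phi>" "j2 x \<le> jsecond \<Phi>" for x
    by (simp_all add: cSUP_upper)
  then show ?thesis
    using K disjoint_interactions_commute[OF sys a1]
    by unfold_locales (auto simp: j1_def j2_def)
qed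

theorem lemma3p4:
  fixes scC :: "complex \<Rightarrow> 'a::{real_normed_algebra_1, banach} \<Rightarrow> 'a"
    and st :: "'a \<Rightarrow> 'a"
    and A :: "'b::{metric_space, countable} set \<Rightarrow> 'a set"
    and \<Phi> :: "'b set \<Rightarrow> 'a"
    and F :: "real \<Rightarrow> real"
    and r n :: real
    and X :: "'b set"
  assumes discrete: "\<forall>x::'b. \<exists>e>0. \<forall>y. dist x y < e \<longrightarrow> y = x"
    and Ffun: "F_function TYPE('b) F"
    and sys: "qmb_system scC st A \<Phi>"
    and a1: "A1 scC st A \<Phi>"
    and bdd: "bounded_interaction \<Phi>"
    and rng: "finite_range \<Phi> r" and r_pos: "r > 0"
    and X_fin: "finite X" and n_pos: "n > 0"
  shows "(\<forall>L. finite L \<and> Xint X (n + r) \<subseteq> L \<longrightarrow>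
            norm (commutator (H_loc \<Phi> L)
                    (\<Sum>\<^sub>\<infinity>Y\<in>{Y. finite Y \<and> Y \<inter> Xint X (n + r) \<noteq> {}}. \<Phi> Y))
            \<le> 2 * jprime \<Phi> * jsecond \<Phi> * real (card (bdry_Phi \<Phi> (Xint X (n + r)))))
       \<and> (\<forall>L. finite L \<and> Xnbhd X (n + r) \<subseteq> L \<longrightarrow>
            norm (commutator (H_loc \<Phi> L) (H_loc \<Phi> (Xnbhd X (n + r))))
            \<le> 2 * jprime \<Phi> * jsecond \<Phi> * real (card (bdry_Phi \<Phi> (Xnbhd X (n + r)))))"
proof -
  \<comment> \<open>The F-function alone makes closed balls finite.\<close>
  interpret local_interaction \<Phi> "jprime \<Phi>" "jsecond \<Phi>"
    using local_interaction_jprime_jsecond[OF Ffun sys a1 bdd rng less_imp_le[OF r_pos]] .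
  show ?thesis
    using norm_commutator_H_loc_meeting_le norm_commutator_H_loc_le by blast
qed

end
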